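(* Let $M(n,h)=\frac{2n+2-2\lceil 2\sqrt{n+h}\,\rceil}{4}$. If $A$ is a polyomino with $n$ tiles and $h$ holes such that $M(n,h)=h+\tfrac12$, then exactly one of the following occurs: (1) the dual graph of $A$ has a single cycle; (2) $A$ has a single hole of area two and all its other holes have area one; (3) $p_o(A)=2\lceil 2\sqrt{n+h}\,\rceil+2$.
   Context: A polyomino is a finite union of closed unit squares (tiles) of the square lattice, any two meeting (if at all) in a whole edge, whose interior is connected. Its holes are the bounded connected components of its complement in the plane; the area of a hole is the number of unit squares needed to fill it. The dual graph has a vertex per tile and an edge between tiles sharing an edge. $p_o(A)$ is the number of unit edges on the boundary of $A$ not bounding a hole. *)

theory Defs
  imports Complex_Main
begin

text \<open>Cells (unit squares) of the square lattice are indexed by their lower-left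
corner in int \<times> int; cell (i,j) is the closed square [i,i+1] \<times> [j,j+1].\<close>

type_synonym cell = "int \<times> int"

definition adj :: "cell \<Rightarrow> cell \<Rightarrow> bool" where
  "adj p q \<longleftrightarrow> \<bar>fst p - fst q\<bar> + \<bar>snd p - snd q\<bar> = 1"

definition adj_on :: "cell set \<Rightarrow> (cell \<times> cell) set" where
  "adj_on S = {(p, q). p \<in> S \<and> q \<in> S \<and> adj p q}"

text \<open>A union of closed unit squares has connected interior iff its tiles are
connected through shared edges.\<close>
definition polyomino :: "cell set \<Rightarrow> bool" where
  "polyomino A \<longleftrightarrow> finite A \<and> A \<noteq> {} \<and>
     (\<forall>p\<in>A. \<forall>q\<in>A. (p, q) \<in> (adj_on A)\<^sup>*)"

definition comp_of :: "cell set \<Rightarrow> cell \<Rightarrow> cell set" where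
  "comp_of S p = {q. (p, q) \<in> (adj_on S)\<^sup>*}"

text \<open>Holes: bounded connected components of the complement. The connected
components of the (open) complement of the union of tiles correspond exactly to
the edge-connected components of the set of non-tile cells; a hole is given by
the set of cells filling it, and its area is the number of those cells.\<close>
definition holes :: "cell set \<Rightarrow> cell set set" where
  "holes A = {C. \<exists>p. p \<notin> A \<and> C = comp_of (- A) p \<and> finite C}"

text \<open>Outer perimeter: number of unit boundary edges not bounding a hole, i.e.
edges between a tile and a non-tile cell lying in the unbounded component.
Each such edge corresponds to exactly one ordered pair (tile, outside cell).\<close>
definition p_o :: "cell set \<Rightarrow> nat" where
  "p_o A = card {(a, b). a \<in> A \<and> b \<notin> A \<and> adj a b \<and> (\<forall>H\<in>holes A. b \<notin> H)}"

definition dual_edges :: "cell set \<Rightarrow> cell set set" where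
  "dual_edges A = {{a, b} | a b. a \<in> A \<and> b \<in> A \<and> adj a b}"

definition is_dual_cycle :: "cell set \<Rightarrow> cell set set \<Rightarrow> bool" where
  "is_dual_cycle A E \<longleftrightarrow> E \<noteq> {} \<and> E \<subseteq> dual_edges A \<and>
     (\<forall>v\<in>\<Union>E. card {e\<in>E. v \<in> e} = 2) \<and>
     (\<forall>u\<in>\<Union>E. \<forall>v\<in>\<Union>E. (u, v) \<in> {(x, y). {x, y} \<in> E}\<^sup>*)"

definition dual_single_cycle :: "cell set \<Rightarrow> bool" where
  "dual_single_cycle A \<longleftrightarrow> (\<exists>!E. is_dual_cycle A E)"

definition M :: "nat \<Rightarrow> nat \<Rightarrow> real" where
  "M n h = (2 * real n + 2 - 2 * of_int \<lceil>2 * sqrt (real n + real h)\<rceil>) / 4"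

end

theory Submission
  imports Defs
begin

text \<open>Every tile has four sides, each shared with a neighbouring tile, with a hole, or with
the outside. With e the number of dual edges this gives
  4n = p_o(A) + (sum of the perimeters of the holes) + 2e.
A lattice set meeting r rows and c columns has perimeter at least 2(r + c), and
2\<lceil>2\<surd>N\<rceil> \<le> 2(r + c) for its area N \<le> rc. Applied to A with its holes filled in, this gives
p_o(A) \<ge> 2k with k = \<lceil>2\<surd>(n + h)\<rceil>; applied to a hole it gives perimeter 4 for area 1,
at least 6 for area 2 and at least 8 for larger area. The hypothesis M(n,h) = h + 1/2 says
k = n - 2h, so the identity forces e \<le> n. The dual graph is connected, hence e = n (a
unicyclic graph, and then every inequality is tight) or e = n - 1 (a tree, and then the
two units of slack go either to the outer perimeter or to a single hole of area two).\<close>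

lemma adj_commute: "adj p q \<longleftrightarrow> adj q p"
  unfolding adj_def by (simp add: abs_minus_commute add.commute)

lemma adj_irrefl: "\<not> adj p p"
  unfolding adj_def by simp

lemma neighbours_eq: "{q. adj (x, y) q} = {(x + 1, y), (x - 1, y), (x, y + 1), (x, y - 1)}"
  unfolding adj_def by (auto simp: abs_if split: if_splits)

lemma card_neighbours: "card {q. adj p q} = 4"
  by (cases p) (simp add: neighbours_eq)

lemma finite_neighbours: "finite {q. adj p q}"
  by (cases p) (simp add: neighbours_eq)

section \<open>Perimeter\<close>

definition border :: "cell set \<Rightarrow> (cell \<times> cell) set" where
  "border S = {(a, b). a \<in> S \<and> b \<notin> S \<and> adj a b}"

lemma border_subset: "border S \<subseteq> S \<times> (\<Union>a\<in>S. {b. adj a b})"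
  unfolding border_def by auto

lemma finite_border: "finite S \<Longrightarrow> finite (border S)"
  by (rule finite_subset[OF border_subset]) (simp add: finite_neighbours)

lemma card_border_singleton: "card (border {p}) = 4"
proof -
  have "border {p} = Pair p ` {q. adj p q}"
    unfolding border_def using adj_irrefl by auto
  then show ?thesis by (simp add: card_image inj_on_def card_neighbours)
qed

lemma card_border_plus_card_adj_on:
  assumes "finite A"
  shows "card (border A) + card (adj_on A) = 4 * card A"
proof -
  have "card (border A) + card (adj_on A) =
      (\<Sum>a\<in>A. card {b. b \<notin> A \<and> adj a b}) + (\<Sum>a\<in>A. card {b. b \<in> A \<and> adj a b})"
  proof -
    have "border A = Sigma A (\<lambda>a. {b. b \<notin> A \<and> adj a b})"
      "adj_on A = Sigma A (\<lambda>a. {b. b \<in> A \<and> adj a b})"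
      unfolding border_def adj_on_def by auto
    then show ?thesis using assms finite_neighbours by (simp add: card_SigmaI)
  qed
  also have "\<dots> = (\<Sum>a\<in>A. card {b. adj a b})"
  proof -
    have "card {b. b \<notin> A \<and> adj a b} + card {b. b \<in> A \<and> adj a b} = card {b. adj a b}" for a
      by (subst card_Un_disjoint[symmetric])
        (auto intro: finite_subset[OF _ finite_neighbours] intro!: arg_cong[where f = card])
    then show ?thesis by (simp add: sum.distrib[symmetric])
  qed
  finally show ?thesis by (simp add: card_neighbours)
qed

lemma row_has_ends:
  fixes S :: "cell set"
  assumes "finite S" "(x, y) \<in> S"
  obtains l r where "(l, y) \<in> S" "(l - 1, y) \<notin> S" "(r, y) \<in> S" "(r + 1, y) \<notin> S"
proof -
  let ?R = "{x. (x, y) \<in> S}"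
  have "finite ?R"
    using finite_imageI[OF assms(1), of fst] by (rule finite_subset[rotated]) force
  moreover have "?R \<noteq> {}" using assms(2) by blast
  ultimately show thesis
    using Min_in Max_in Min_le[of ?R "Min ?R - 1"] Max_ge[of ?R "Max ?R + 1"]
    by (intro that[of "Min ?R" "Max ?R"]) auto
qed

lemma card_border_ge_rows_cols:
  assumes fin: "finite S"
  shows "2 * (card (fst ` S) + card (snd ` S)) \<le> card (border S)"
proof -
  define exits where
    "exits d = {(a, b). a \<in> S \<and> b \<notin> S \<and> b = (fst a + fst d, snd a + snd d)}" for d :: cell
  let ?D = "{(-1, 0), (1, 0), (0, -1), (0, 1)} :: cell set"
  have finite_exits: "finite (exits d)" for d
    by (rule finite_subset[of _ "(\<lambda>a. (a, (fst a + fst d, snd a + snd d))) ` S"])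
      (auto simp: exits_def fin)
  have rows: "card (snd ` S) \<le> card (exits (dx, 0))" if "dx = 1 \<or> dx = -1" for dx
  proof (rule surj_card_le[OF finite_exits, of _ "\<lambda>z. snd (fst z)"], rule subsetI)
    fix y assume "y \<in> snd ` S"
    then obtain x where "(x, y) \<in> S" by force
    then obtain l r where "(l, y) \<in> S" "(l - 1, y) \<notin> S" "(r, y) \<in> S" "(r + 1, y) \<notin> S"
      using row_has_ends[OF fin] by blast
    then have "((l, y), (l - 1, y)) \<in> exits (-1, 0)" "((r, y), (r + 1, y)) \<in> exits (1, 0)"
      unfolding exits_def by simp_all
    then show "y \<in> (\<lambda>z. snd (fst z)) ` exits (dx, 0)"
      using that by (auto intro: rev_image_eqI)
  qed
  have cols: "card (fst ` S) \<le> card (exits (0, dy))" if "dy = 1 \<or> dy = -1" for dy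
  proof (rule surj_card_le[OF finite_exits, of _ "\<lambda>z. fst (fst z)"], rule subsetI)
    fix x assume "x \<in> fst ` S"
    then obtain y where "(y, x) \<in> prod.swap ` S" by force
    then obtain l r where "(x, l) \<in> S" "(x, l - 1) \<notin> S" "(x, r) \<in> S" "(x, r + 1) \<notin> S"
      using row_has_ends[of "prod.swap ` S" y x] fin by (auto simp: pair_in_swap_image)
    then have "((x, l), (x, l - 1)) \<in> exits (0, -1)" "((x, r), (x, r + 1)) \<in> exits (0, 1)"
      unfolding exits_def by simp_all
    then show "x \<in> (\<lambda>z. fst (fst z)) ` exits (0, dy)"
      using that by (auto intro: rev_image_eqI)
  qed
  have "(\<Sum>d\<in>?D. card (exits d)) = card (\<Union>d\<in>?D. exits d)"
    by (rule card_UN_disjoint[symmetric]) (auto simp: finite_exits, auto simp: exits_def)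
  also have "\<dots> \<le> card (border S)"
    by (rule card_mono[OF finite_border[OF fin]]) (auto simp: exits_def border_def adj_def)
  finally show ?thesis
    using rows[of 1] rows[of "-1"] cols[of 1] cols[of "-1"] by simp
qed

lemma card_le_rows_times_cols:
  assumes "finite S"
  shows "card S \<le> card (fst ` S) * card (snd ` S)"
proof -
  have "card S \<le> card (fst ` S \<times> snd ` S)"
    by (rule card_mono) (auto simp: assms intro: rev_image_eqI)
  then show ?thesis by (simp add: card_cartesian_product)
qed

lemma ceiling_two_sqrt_le:
  fixes r c N :: nat
  assumes "N \<le> r * c"
  shows "\<lceil>2 * sqrt (real N)\<rceil> \<le> int (r + c)"
proof -
  have "(2 * sqrt (real N))\<^sup>2 = 4 * real N" by (simp add: power_mult_distrib)
  also have "\<dots> \<le> 4 * (real r * real c)"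
    using assms by (simp add: of_nat_mult[symmetric] del: of_nat_mult)
  also have "\<dots> \<le> (real r + real c)\<^sup>2"
    using zero_le_power2[of "real r - real c"] by (simp add: power2_eq_square algebra_simps)
  finally have "2 * sqrt (real N) \<le> real r + real c"
    by (rule power2_le_imp_le) simp
  then show ?thesis by (simp add: ceiling_le_iff)
qed

lemma isoperimetric_border:
  assumes "finite S"
  shows "2 * \<lceil>2 * sqrt (real (card S))\<rceil> \<le> int (card (border S))"
proof -
  have "2 * (card (fst ` S) + card (snd ` S)) \<le> card (border S)"
    by (rule card_border_ge_rows_cols[OF assms])
  moreover have "\<lceil>2 * sqrt (real (card S))\<rceil> \<le> int (card (fst ` S) + card (snd ` S))"
    by (rule ceiling_two_sqrt_le[OF card_le_rows_times_cols[OF assms]])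
  ultimately show ?thesis
    by (simp add: of_nat_le_iff[symmetric, where 'a=int])
qed

lemma less_ceiling_two_sqrt:
  fixes m N :: nat
  assumes "m\<^sup>2 < 4 * N"
  shows "int m < \<lceil>2 * sqrt (real N)\<rceil>"
proof -
  have "real m < sqrt (4 * real N)"
    by (rule real_less_rsqrt) (use assms in \<open>simp flip: of_nat_power\<close>)
  then show ?thesis by (simp add: real_sqrt_mult less_ceiling_iff)
qed

lemma card_border_ge_by_area:
  fixes m :: nat
  assumes "finite S" "m\<^sup>2 < 4 * card S"
  shows "2 * m + 2 \<le> card (border S)"
  using isoperimetric_border[OF assms(1)] less_ceiling_two_sqrt[OF assms(2)] by linarith

lemma sum_card_border_cases:
  fixes T :: "cell set set"
  assumes fin: "finite T" and mem: "\<forall>S\<in>T. finite S \<and> S \<noteq> {}"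
  shows "4 * card T \<le> (\<Sum>S\<in>T. card (border S))"
    and "(\<Sum>S\<in>T. card (border S)) \<le> 4 * card T + 1 \<Longrightarrow>
           (\<Sum>S\<in>T. card (border S)) = 4 * card T \<and> (\<forall>S\<in>T. card S = 1)"
    and "(\<Sum>S\<in>T. card (border S)) = 4 * card T + 2 \<Longrightarrow>
           \<exists>S\<in>T. card S = 2 \<and> (\<forall>S'\<in>T. S' \<noteq> S \<longrightarrow> card S' = 1)"
proof -
  define excess where "excess S = card (border S) - 4" for S
  have area_pos: "1 \<le> card S" if "S \<in> T" for S
    using mem that by (simp add: Suc_le_eq card_gt_0_iff)
  have border_ge: "4 \<le> card (border S)" "2 \<le> card S \<Longrightarrow> 6 \<le> card (border S)"
    "3 \<le> card S \<Longrightarrow> 8 \<le> card (border S)" if "S \<in> T" for S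
    using card_border_ge_by_area[of S 1] card_border_ge_by_area[of S 2]
      card_border_ge_by_area[of S 3] mem that area_pos[OF that] by simp_all
  have excess_0: "excess S = 0 \<longleftrightarrow> card S = 1" if "S \<in> T" for S
  proof
    assume "card S = 1"
    then obtain p where "S = {p}" by (rule card_1_singletonE)
    then show "excess S = 0" by (simp add: excess_def card_border_singleton)
  next
    assume "excess S = 0"
    then show "card S = 1"
      using border_ge(2)[OF that] area_pos[OF that] unfolding excess_def by linarith
  qed
  have excess_2: "2 \<le> excess S" if "S \<in> T" "card S \<noteq> 1" for S
    using border_ge(2)[OF that(1)] area_pos[OF that(1)] that(2) unfolding excess_def by linarith
  have excess_4: "4 \<le> excess S" if "S \<in> T" "3 \<le> card S" for S
    using border_ge(3)[OF that(1)] that(2) unfolding excess_def by linarith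
  have sum_eq: "(\<Sum>S\<in>T. card (border S)) = 4 * card T + sum excess T"
  proof -
    have "(\<Sum>S\<in>T. card (border S)) = (\<Sum>S\<in>T. 4 + excess S)"
      using border_ge(1) unfolding excess_def by (intro sum.cong) auto
    then show ?thesis by (simp add: sum.distrib)
  qed
  have excess_le: "excess S \<le> sum excess T" if "S \<in> T" for S
    by (rule member_le_sum[OF that _ fin]) simp
  show "4 * card T \<le> (\<Sum>S\<in>T. card (border S))"
    using sum_eq by simp
  show "(\<Sum>S\<in>T. card (border S)) = 4 * card T \<and> (\<forall>S\<in>T. card S = 1)"
    if "(\<Sum>S\<in>T. card (border S)) \<le> 4 * card T + 1"
  proof -
    have "card S = 1" if "S \<in> T" for S
      using excess_le[OF that] excess_2[OF that] \<open>_ \<le> 4 * card T + 1\<close> sum_eq by linarith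
    then show ?thesis using sum_eq fin excess_0 by simp
  qed
  show "\<exists>S\<in>T. card S = 2 \<and> (\<forall>S'\<in>T. S' \<noteq> S \<longrightarrow> card S' = 1)"
    if "(\<Sum>S\<in>T. card (border S)) = 4 * card T + 2"
  proof -
    have two: "sum excess T = 2" using that sum_eq by simp
    then have "\<not> (\<forall>S\<in>T. excess S = 0)" using sum.neutral[of T excess] by linarith
    then obtain S where S: "S \<in> T" "excess S \<noteq> 0" by blast
    have "card S \<noteq> 1" using excess_0[OF S(1)] S(2) by simp
    moreover have "\<not> 3 \<le> card S" using excess_4[OF S(1)] excess_le[OF S(1)] two by linarith
    ultimately have "card S = 2" using area_pos[OF S(1)] by linarith
    moreover have "sum excess (T - {S}) = 0"
      using sum.remove[OF fin S(1), of excess] excess_2[OF S(1) \<open>card S \<noteq> 1\<close>] two by linarith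
    then have "\<forall>S'\<in>T. S' \<noteq> S \<longrightarrow> card S' = 1"
      using fin excess_0 by simp
    ultimately show ?thesis using S(1) by blast
  qed
qed

section \<open>Holes\<close>

lemma comp_of_self: "p \<in> comp_of S p"
  unfolding comp_of_def by simp

lemma comp_of_subset: "comp_of S p \<subseteq> insert p S"
proof
  fix q assume "q \<in> comp_of S p"
  then have "(p, q) \<in> (adj_on S)\<^sup>*" unfolding comp_of_def by simp
  then show "q \<in> insert p S"
    by (induction rule: rtrancl_induct) (auto simp: adj_on_def)
qed

lemma comp_of_closed:
  assumes "q \<in> comp_of S p" "q \<in> S" "r \<in> S" "adj q r"
  shows "r \<in> comp_of S p"
  using assms rtrancl_into_rtrancl[of p q "adj_on S" r] unfolding comp_of_def adj_on_def by auto

lemma comp_of_eq: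
  assumes "q \<in> comp_of S p"
  shows "comp_of S q = comp_of S p"
proof -
  have "sym ((adj_on S)\<^sup>*)"
    by (rule sym_rtrancl) (auto simp: sym_def adj_on_def adj_commute)
  moreover have "(p, q) \<in> (adj_on S)\<^sup>*" using assms unfolding comp_of_def by simp
  ultimately have "(q, p) \<in> (adj_on S)\<^sup>*" unfolding sym_def by blast
  with \<open>(p, q) \<in> _\<close> show ?thesis unfolding comp_of_def by (auto intro: rtrancl_trans)
qed

lemma hole_eq_comp_of: "H \<in> holes A \<Longrightarrow> x \<in> H \<Longrightarrow> H = comp_of (- A) x"
  unfolding holes_def using comp_of_eq by blast

lemma hole_subset_compl: "H \<in> holes A \<Longrightarrow> H \<subseteq> - A"
  unfolding holes_def using comp_of_subset by blast

lemma hole_nonempty: "H \<in> holes A \<Longrightarrow> H \<noteq> {}"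
  unfolding holes_def using comp_of_self by blast

lemma finite_hole: "H \<in> holes A \<Longrightarrow> finite H"
  unfolding holes_def by blast

lemma hole_closed:
  assumes "H \<in> holes A" "x \<in> H" "y \<notin> A" "adj x y"
  shows "y \<in> H"
proof -
  have "x \<in> - A" using hole_subset_compl assms(1,2) by blast
  then show ?thesis
    using comp_of_closed[OF comp_of_self, of x "- A" y] hole_eq_comp_of[OF assms(1,2)] assms(3,4) by simp
qed

lemma holes_disjoint:
  "H1 \<in> holes A \<Longrightarrow> H2 \<in> holes A \<Longrightarrow> x \<in> H1 \<Longrightarrow> x \<in> H2 \<Longrightarrow> H1 = H2"
  using hole_eq_comp_of by metis

lemma border_hole: "H \<in> holes A \<Longrightarrow> (x, y) \<in> border H \<Longrightarrow> y \<in> A"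
  unfolding border_def using hole_closed by blast

lemma finite_holes:
  assumes "finite A"
  shows "finite (holes A)"
proof -
  have "H \<in> comp_of (- A) ` (\<Union>a\<in>A. {b. adj a b})" if H: "H \<in> holes A" for H
  proof -
    obtain x y where "(x, y) \<in> H" using hole_nonempty[OF H] by auto
    then obtain l where "(l, y) \<in> H" "(l - 1, y) \<notin> H"
      using row_has_ends[OF finite_hole[OF H]] by blast
    then have "((l, y), (l - 1, y)) \<in> border H" unfolding border_def adj_def by simp
    then have "(l - 1, y) \<in> A" by (rule border_hole[OF H])
    moreover have "adj (l - 1, y) (l, y)" unfolding adj_def by simp
    ultimately show ?thesis using hole_eq_comp_of[OF H \<open>(l, y) \<in> H\<close>] by blast
  qed
  then have "holes A \<subseteq> comp_of (- A) ` (\<Union>a\<in>A. {b. adj a b})" by blast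
  then show ?thesis
    by (rule finite_subset) (simp add: assms finite_neighbours)
qed

lemma p_o_eq_card_outer_border: "p_o A = card {z \<in> border A. \<forall>H\<in>holes A. snd z \<notin> H}"
  unfolding p_o_def border_def by (rule arg_cong[where f = card]) auto

lemma card_border_eq_p_o_plus_holes:
  assumes fin: "finite A"
  shows "card (border A) = p_o A + (\<Sum>H\<in>holes A. card (border H))"
proof -
  let ?outer = "{z \<in> border A. \<forall>H\<in>holes A. snd z \<notin> H}"
  let ?inner = "\<lambda>H. {z \<in> border A. snd z \<in> H}"
  have inner_eq: "?inner H = prod.swap ` border H" if H: "H \<in> holes A" for H
  proof
    show "?inner H \<subseteq> prod.swap ` border H"
      using hole_subset_compl[OF H] by (force simp: border_def adj_commute)
    show "prod.swap ` border H \<subseteq> ?inner H"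
      using hole_subset_compl[OF H] border_hole[OF H] by (force simp: border_def adj_commute)
  qed
  have finite_inner: "finite (?inner H)" for H
    using finite_border[OF fin] by simp
  have "card (border A) = card (?outer \<union> (\<Union>H\<in>holes A. ?inner H))"
    by (rule arg_cong[where f = card]) blast
  also have "\<dots> = card ?outer + card (\<Union>H\<in>holes A. ?inner H)"
    by (rule card_Un_disjoint) (auto intro: finite_subset[OF _ finite_border[OF fin]])
  also have "card (\<Union>H\<in>holes A. ?inner H) = (\<Sum>H\<in>holes A. card (?inner H))"
    by (rule card_UN_disjoint[OF finite_holes[OF fin]])
      (auto simp: finite_inner dest: holes_disjoint)
  also have "\<dots> = (\<Sum>H\<in>holes A. card (border H))"
    by (rule sum.cong) (simp_all add: inner_eq card_image)
  finally show ?thesis by (simp add: p_o_eq_card_outer_border)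
qed

lemma p_o_lower_bound:
  assumes fin: "finite A"
  shows "2 * \<lceil>2 * sqrt (real (card A) + real (card (holes A)))\<rceil> \<le> int (p_o A)"
proof -
  define F where "F = A \<union> \<Union>(holes A)"
  have finite_F: "finite F"
    unfolding F_def using fin finite_holes[OF fin] finite_hole by blast
  have "card (holes A) \<le> (\<Sum>H\<in>holes A. card H)"
    using sum_mono[of "holes A" "\<lambda>_. 1" card] hole_nonempty finite_hole
    by (simp add: Suc_le_eq card_gt_0_iff)
  also have "\<dots> = card (\<Union>(holes A))"
    by (rule card_Union_disjoint[symmetric])
      (auto simp: pairwise_def disjnt_def finite_hole dest: holes_disjoint)
  also have "card A + \<dots> = card F"
    unfolding F_def using fin finite_holes[OF fin] finite_hole hole_subset_compl
    by (subst card_Un_disjoint) blast+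
  finally have "card A + card (holes A) \<le> card F"
    by simp
  then have "\<lceil>2 * sqrt (real (card A) + real (card (holes A)))\<rceil> \<le> \<lceil>2 * sqrt (real (card F))\<rceil>"
    by (intro ceiling_mono mult_left_mono real_sqrt_le_mono) simp_all
  also have "2 * \<dots> \<le> int (card (border F))"
    by (rule isoperimetric_border[OF finite_F])
  also have "card (border F) \<le> p_o A"
  proof -
    have "border F \<subseteq> {z \<in> border A. \<forall>H\<in>holes A. snd z \<notin> H}"
    proof
      fix z assume "z \<in> border F"
      then obtain a b where z: "z = (a, b)" "a \<in> F" "b \<notin> F" "adj a b"
        unfolding border_def by auto
      then have "a \<in> A" unfolding F_def using hole_closed by blast
      with z show "z \<in> {z \<in> border A. \<forall>H\<in>holes A. snd z \<notin> H}"
        unfolding F_def border_def by auto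
    qed
    then show ?thesis
      unfolding p_o_eq_card_outer_border by (rule card_mono[rotated]) (simp add: finite_border fin)
  qed
  finally show ?thesis by simp
qed

section \<open>The dual graph\<close>

definition deg :: "cell set \<Rightarrow> cell \<Rightarrow> nat" where
  "deg S v = card {w \<in> S. adj v w}"

lemma dual_edges_subset_Pow: "dual_edges S \<subseteq> Pow S"
  unfolding dual_edges_def by auto

lemma finite_dual_edges: "finite S \<Longrightarrow> finite (dual_edges S)"
  using dual_edges_subset_Pow by (rule finite_subset) simp

lemma card_dual_edge:
  assumes "e \<in> dual_edges S"
  shows "card e = 2"
proof -
  obtain a b where "e = {a, b}" "adj a b" using assms unfolding dual_edges_def by blast
  moreover have "a \<noteq> b" using \<open>adj a b\<close> adj_irrefl by blast
  ultimately show ?thesis by simp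
qed

lemma card_dual_edges_at:
  assumes "v \<in> S"
  shows "card {e \<in> dual_edges S. v \<in> e} = deg S v"
proof -
  have "{e \<in> dual_edges S. v \<in> e} = (\<lambda>w. {v, w}) ` {w \<in> S. adj v w}"
  proof (intro equalityI subsetI)
    fix e assume "e \<in> {e \<in> dual_edges S. v \<in> e}"
    then obtain a b where "e = {a, b}" "a \<in> S" "b \<in> S" "adj a b" "v \<in> e"
      unfolding dual_edges_def by blast
    then show "e \<in> (\<lambda>w. {v, w}) ` {w \<in> S. adj v w}"
      using adj_commute[of a b] by (auto simp: insert_commute)
  next
    fix e assume "e \<in> (\<lambda>w. {v, w}) ` {w \<in> S. adj v w}"
    then show "e \<in> {e \<in> dual_edges S. v \<in> e}"
      using assms unfolding dual_edges_def by blast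
  qed
  moreover have "inj_on (\<lambda>w. {v, w}) {w \<in> S. adj v w}"
    by (rule inj_onI) (auto simp: doubleton_eq_iff)
  ultimately show ?thesis unfolding deg_def by (simp add: card_image)
qed

lemma sum_deg:
  assumes "finite S"
  shows "(\<Sum>v\<in>S. deg S v) = 2 * card (dual_edges S)"
proof -
  have "(\<Sum>v\<in>S. deg S v) = (\<Sum>v\<in>S. card {e \<in> dual_edges S. v \<in> e})"
    by (simp add: card_dual_edges_at)
  also have "\<dots> = 2 * card (dual_edges S)"
  proof (rule sum_multicount[OF assms finite_dual_edges[OF assms]], rule ballI)
    fix e assume e: "e \<in> dual_edges S"
    then have "{v \<in> S. v \<in> e} = e" using dual_edges_subset_Pow by auto
    then show "card {v \<in> S. v \<in> e} = 2" using card_dual_edge[OF e] by simp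
  qed
  finally show ?thesis .
qed

lemma card_adj_on:
  assumes "finite S"
  shows "card (adj_on S) = 2 * card (dual_edges S)"
proof -
  have "adj_on S = Sigma S (\<lambda>v. {w \<in> S. adj v w})" unfolding adj_on_def by auto
  then show ?thesis using assms by (simp add: card_SigmaI deg_def[symmetric] sum_deg)
qed

lemma dual_edges_remove: "dual_edges (S - {v}) = {e \<in> dual_edges S. v \<notin> e}"
  unfolding dual_edges_def by auto

lemma card_dual_edges_remove:
  assumes "finite S" "v \<in> S"
  shows "card (dual_edges S) = card (dual_edges (S - {v})) + deg S v"
proof -
  have "card (dual_edges S) = card {e \<in> dual_edges S. v \<notin> e} + card {e \<in> dual_edges S. v \<in> e}"
    by (subst card_Un_disjoint[symmetric])
      (auto simp: finite_dual_edges[OF assms(1)] intro!: arg_cong[where f = card])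
  then show ?thesis by (simp add: dual_edges_remove card_dual_edges_at[OF assms(2)])
qed

lemma is_dual_cycle_remove_leaf:
  assumes "finite S" "v \<in> S" "deg S v \<le> 1"
  shows "is_dual_cycle (S - {v}) E \<longleftrightarrow> is_dual_cycle S E"
proof
  assume E: "is_dual_cycle S E"
  have "v \<notin> \<Union>E"
  proof
    assume "v \<in> \<Union>E"
    then have "card {e \<in> E. v \<in> e} = 2" using E unfolding is_dual_cycle_def by blast
    moreover have "card {e \<in> E. v \<in> e} \<le> card {e \<in> dual_edges S. v \<in> e}"
      using E finite_dual_edges[OF assms(1)] unfolding is_dual_cycle_def by (intro card_mono) auto
    ultimately show False using card_dual_edges_at[OF assms(2)] assms(3) by simp
  qed
  with E show "is_dual_cycle (S - {v}) E" unfolding is_dual_cycle_def dual_edges_remove by auto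
qed (auto simp: is_dual_cycle_def dual_edges_remove)

lemma polyomino_remove_leaf:
  assumes P: "polyomino S" and v: "v \<in> S" "deg S v = 1"
  shows "polyomino (S - {v})"
proof -
  obtain u where "{w \<in> S. adj v w} = {u}"
    using v(2) unfolding deg_def by (rule card_1_singletonE)
  then have u: "u \<in> S" "adj v u" and leaf: "\<And>w. w \<in> S \<Longrightarrow> adj v w \<Longrightarrow> w = u"
    by auto
  have "u \<noteq> v" using u(2) adj_irrefl by blast
  let ?R = "(adj_on (S - {v}))\<^sup>*"
  have "(p, q) \<in> ?R" if pq: "p \<in> S - {v}" "q \<in> S - {v}" for p q
  proof -
    have "(p, q) \<in> (adj_on S)\<^sup>*" using P pq unfolding polyomino_def by auto
    \<comment> \<open>a path through the leaf v enters and leaves it via its only neighbour u\<close>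
    then have "(q \<noteq> v \<longrightarrow> (p, q) \<in> ?R) \<and> (q = v \<longrightarrow> (p, u) \<in> ?R)"
    proof (induction rule: rtrancl_induct)
      case base
      then show ?case using pq by simp
    next
      case (step y z)
      then have "y \<in> S" "z \<in> S" "adj y z" unfolding adj_on_def by auto
      then show ?case
        using step.IH leaf[of z] leaf[of y] \<open>u \<noteq> v\<close> adj_commute[of y z]
        by (cases "y = v"; cases "z = v") (auto simp: adj_on_def intro: rtrancl_into_rtrancl)
    qed
    then show ?thesis using pq by simp
  qed
  then show ?thesis using P u \<open>u \<noteq> v\<close> unfolding polyomino_def by auto
qed

lemma deg_pos:
  assumes P: "polyomino S" and "v \<in> S" "w \<in> S" "w \<noteq> v"
  shows "0 < deg S v"
proof -
  have "(v, w) \<in> (adj_on S)\<^sup>*" using P assms(2,3) unfolding polyomino_def by auto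
  then obtain u where "(v, u) \<in> adj_on S" using assms(4) by (cases rule: converse_rtranclE) auto
  moreover have "finite {u \<in> S. adj v u}" using P unfolding polyomino_def by simp
  ultimately show ?thesis unfolding deg_def adj_on_def card_gt_0_iff by blast
qed

lemma is_dual_cycle_dual_edges:
  assumes P: "polyomino S" and deg2: "\<And>v. v \<in> S \<Longrightarrow> deg S v = 2"
  shows "is_dual_cycle S (dual_edges S)"
  unfolding is_dual_cycle_def
proof (intro conjI ballI)
  obtain v where v: "v \<in> S" using P unfolding polyomino_def by auto
  show "dual_edges S \<noteq> {}"
    using card_dual_edges_at[OF v] deg2[OF v] by auto
next
  fix v assume "v \<in> \<Union>(dual_edges S)"
  then have "v \<in> S" using dual_edges_subset_Pow by blast
  then show "card {e \<in> dual_edges S. v \<in> e} = 2" using card_dual_edges_at deg2 by simp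
next
  fix u v assume "u \<in> \<Union>(dual_edges S)" "v \<in> \<Union>(dual_edges S)"
  then have "(u, v) \<in> (adj_on S)\<^sup>*"
    using P dual_edges_subset_Pow unfolding polyomino_def by blast
  moreover have "adj_on S \<subseteq> {(x, y). {x, y} \<in> dual_edges S}"
    unfolding adj_on_def dual_edges_def by auto
  ultimately show "(u, v) \<in> {(x, y). {x, y} \<in> dual_edges S}\<^sup>*"
    using rtrancl_mono by blast
qed (rule order_refl)

lemma dual_cycle_eq_dual_edges:
  assumes P: "polyomino S" and deg2: "\<And>v. v \<in> S \<Longrightarrow> deg S v = 2"
    and E: "is_dual_cycle S E"
  shows "E = dual_edges S"
proof -
  have sub: "E \<subseteq> dual_edges S" using E unfolding is_dual_cycle_def by blast
  have fin: "finite S" using P unfolding polyomino_def by simp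
  have closed: "{y, z} \<in> E" if y: "y \<in> \<Union>E" and yz: "{y, z} \<in> dual_edges S" for y z
  proof -
    have "y \<in> S" using y sub dual_edges_subset_Pow by blast
    have "{e \<in> E. y \<in> e} = {e \<in> dual_edges S. y \<in> e}"
    proof (rule card_subset_eq)
      show "finite {e \<in> dual_edges S. y \<in> e}" using finite_dual_edges[OF fin] by simp
      show "{e \<in> E. y \<in> e} \<subseteq> {e \<in> dual_edges S. y \<in> e}" using sub by blast
      have "card {e \<in> E. y \<in> e} = 2" using E y unfolding is_dual_cycle_def by blast
      then show "card {e \<in> E. y \<in> e} = card {e \<in> dual_edges S. y \<in> e}"
        using card_dual_edges_at[OF \<open>y \<in> S\<close>] deg2[OF \<open>y \<in> S\<close>] by simp
    qed
    then show ?thesis using yz by blast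
  qed
  obtain e where "e \<in> E" using E unfolding is_dual_cycle_def by blast
  then obtain w where w: "w \<in> \<Union>E" using sub unfolding dual_edges_def by blast
  have "v \<in> \<Union>E" if "v \<in> S" for v
  proof -
    have "w \<in> S" using w sub dual_edges_subset_Pow by blast
    then have "(w, v) \<in> (adj_on S)\<^sup>*" using P \<open>v \<in> S\<close> unfolding polyomino_def by blast
    then show ?thesis
    proof (induction rule: rtrancl_induct)
      case (step y z)
      then have "{y, z} \<in> dual_edges S" unfolding adj_on_def dual_edges_def by blast
      then show ?case using closed[OF step.IH] by blast
    qed (rule w)
  qed
  then have "dual_edges S \<subseteq> E"
    using closed unfolding dual_edges_def by blast
  then show ?thesis using sub by blast
qed

lemma polyomino_dual_graph:
  assumes "polyomino S"
  shows "card S \<le> card (dual_edges S) + 1 \<and>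
    (card (dual_edges S) + 1 = card S \<longrightarrow> (\<nexists>E. is_dual_cycle S E)) \<and>
    (card (dual_edges S) = card S \<longrightarrow> dual_single_cycle S)"
  using assms
proof (induction "card S" arbitrary: S rule: less_induct)
  case less
  have fin: "finite S" using less.prems unfolding polyomino_def by simp
  show ?case
  proof (cases "\<exists>v\<in>S. deg S v \<le> 1")
    case True
    then obtain v where v: "v \<in> S" "deg S v \<le> 1" by blast
    show ?thesis
    proof (cases "S = {v}")
      case True
      then have "dual_edges S = {}" unfolding dual_edges_def using adj_irrefl by auto
      then show ?thesis using True unfolding dual_single_cycle_def is_dual_cycle_def by auto
    next
      case False
      then obtain w where "w \<in> S" "w \<noteq> v" using v(1) by blast
      then have leaf: "deg S v = 1" using deg_pos[OF less.prems v(1)] v(2) by fastforce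
      have card_S: "card S = card (S - {v}) + 1"
        using card_Suc_Diff1[OF fin v(1)] by simp
      have "card (S - {v}) < card S" using card_S by simp
      note IH = less.hyps[OF this polyomino_remove_leaf[OF less.prems v(1) leaf]]
      have "card (dual_edges S) = card (dual_edges (S - {v})) + 1"
        using card_dual_edges_remove[OF fin v(1)] leaf by simp
      moreover have "is_dual_cycle (S - {v}) = is_dual_cycle S"
        using is_dual_cycle_remove_leaf[OF fin v] by blast
      ultimately show ?thesis using IH card_S unfolding dual_single_cycle_def by simp
    qed
  next
    case False
    then have deg_ge: "\<And>v. v \<in> S \<Longrightarrow> 2 \<le> deg S v" by force
    have "2 * card S \<le> 2 * card (dual_edges S)"
      using sum_mono[of S "\<lambda>_. 2" "deg S"] deg_ge sum_deg[OF fin] by simp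
    moreover have "dual_single_cycle S" if "card (dual_edges S) = card S"
    proof -
      have "deg S v = 2" if "v \<in> S" for v
      proof (rule ccontr)
        assume "deg S v \<noteq> 2"
        then have "2 < deg S v" using deg_ge[OF \<open>v \<in> S\<close>] by simp
        then have "(\<Sum>v\<in>S. 2) < (\<Sum>v\<in>S. deg S v)"
          using deg_ge \<open>v \<in> S\<close> by (intro sum_strict_mono_ex1[OF fin]) auto
        then show False using sum_deg[OF fin] \<open>card (dual_edges S) = card S\<close> by simp
      qed
      then show ?thesis
        unfolding dual_single_cycle_def
        using is_dual_cycle_dual_edges dual_cycle_eq_dual_edges less.prems by blast
    qed
    ultimately show ?thesis by auto
  qed
qed

lemma tree_or_unicyclic:
  assumes "polyomino A" "card (dual_edges A) \<le> card A"
  shows "card (dual_edges A) = card A \<and> dual_single_cycle A \<or>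
    card (dual_edges A) + 1 = card A \<and> \<not> dual_single_cycle A"
proof (cases "card (dual_edges A) = card A")
  case True
  then show ?thesis using polyomino_dual_graph[OF assms(1)] by simp
next
  case False
  then have "card (dual_edges A) + 1 = card A"
    using polyomino_dual_graph[OF assms(1)] assms(2) by linarith
  then show ?thesis using polyomino_dual_graph[OF assms(1)] unfolding dual_single_cycle_def by auto
qed

lemma p_o_plus_hole_borders:
  assumes "finite A"
  shows "p_o A + (\<Sum>H\<in>holes A. card (border H)) + 2 * card (dual_edges A) = 4 * card A"
  using card_border_plus_card_adj_on[OF assms] card_border_eq_p_o_plus_holes[OF assms]
    card_adj_on[OF assms] by simp

lemma M_eq_half_iff:
  "M n h = real h + 1 / 2 \<longleftrightarrow> \<lceil>2 * sqrt (real n + real h)\<rceil> = int n - 2 * int h"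
proof -
  have "M n h = real h + 1 / 2 \<longleftrightarrow>
      real_of_int \<lceil>2 * sqrt (real n + real h)\<rceil> = real_of_int (int n - 2 * int h)"
    unfolding M_def by (simp add: field_simps) linarith
  then show ?thesis by (simp only: of_int_eq_iff)
qed

theorem corollary1:
  fixes A :: "cell set" and n h :: nat
  assumes "polyomino A"
    and "n = card A"
    and "h = card (holes A)"
    and "M n h = real h + 1 / 2"
  shows "let P1 = dual_single_cycle A;
             P2 = (\<exists>H\<in>holes A. card H = 2 \<and> (\<forall>H'\<in>holes A. H' \<noteq> H \<longrightarrow> card H' = 1));
             P3 = (int (p_o A) = 2 * \<lceil>2 * sqrt (real n + real h)\<rceil> + 2)
         in (P1 \<and> \<not> P2 \<and> \<not> P3) \<or> (\<not> P1 \<and> P2 \<and> \<not> P3) \<or> (\<not> P1 \<and> \<not> P2 \<and> P3)"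
proof -
  have fin: "finite A" using assms(1) unfolding polyomino_def by simp
  define k where "k = \<lceil>2 * sqrt (real n + real h)\<rceil>"
  define S where "S = (\<Sum>H\<in>holes A. card (border H))"
  have k: "k = int n - 2 * int h" using assms(4) unfolding k_def M_eq_half_iff .
  have count: "p_o A + S + 2 * card (dual_edges A) = 4 * n"
    using p_o_plus_hole_borders[OF fin] unfolding S_def assms(2) .
  have p_o_ge: "2 * k \<le> int (p_o A)" using p_o_lower_bound[OF fin] unfolding k_def assms(2,3) .
  have "\<forall>H\<in>holes A. finite H \<and> H \<noteq> {}" using finite_hole hole_nonempty by blast
  note holes_cases = sum_card_border_cases[OF finite_holes[OF fin] this, folded S_def assms(3)]
  define P2 where
    "P2 \<longleftrightarrow> (\<exists>H\<in>holes A. card H = 2 \<and> (\<forall>H'\<in>holes A. H' \<noteq> H \<longrightarrow> card H' = 1))"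
  define P3 where "P3 \<longleftrightarrow> int (p_o A) = 2 * k + 2"
  have no_P2: "\<not> P2" if "S \<le> 4 * h + 1"
    using holes_cases(2)[OF that] unfolding P2_def by auto
  have "4 * h \<le> S" by (rule holes_cases(1))
  then have "card (dual_edges A) \<le> card A" using count p_o_ge k assms(2) by linarith
  then consider (unicyclic) "card (dual_edges A) = n" "dual_single_cycle A"
    | (tree) "card (dual_edges A) + 1 = n" "\<not> dual_single_cycle A"
    using tree_or_unicyclic[OF assms(1)] assms(2) by blast
  then have "dual_single_cycle A \<and> \<not> P2 \<and> \<not> P3 \<or>
      \<not> dual_single_cycle A \<and> P2 \<and> \<not> P3 \<or> \<not> dual_single_cycle A \<and> \<not> P2 \<and> P3"
  proof cases
    case unicyclic
    then have "int (p_o A) = 2 * k" "S = 4 * h" using count p_o_ge k \<open>4 * h \<le> S\<close> by linarith+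
    then show ?thesis using unicyclic no_P2 unfolding P3_def by simp
  next
    case tree
    then have "int (p_o A) + int S = 2 * k + 4 * int h + 2" using count k by linarith
    then consider (outer) "P3" "S = 4 * h" | (odd) "S = 4 * h + 1"
      | (hole) "int (p_o A) = 2 * k" "S = 4 * h + 2"
      using p_o_ge \<open>4 * h \<le> S\<close> unfolding P3_def by linarith
    then show ?thesis
    proof cases
      case outer
      then show ?thesis using tree no_P2 by simp
    next
      case odd
      then show ?thesis using holes_cases(2) by simp
    next
      case hole
      then have P2 using holes_cases(3) unfolding P2_def by simp
      with hole show ?thesis using tree unfolding P3_def by simp
    qed
  qed
  then show ?thesis unfolding Let_def P2_def P3_def k_def .
qed

end
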